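(* Let $L$ be a principal element lattice and $n\ge1$. Then the following statements are equivalent: (1) Every proper element of $L$ is a quasi $n$-absorbing element of $L$. (2) For every $a,b\in L_*$, $a^n=ca^nb$ for some $c\in L$ or $a^{n-1}b=da^nb$ for some $d\in L$. (3) For all $a_1,a_2,\dots,a_{n+1}\in L_*$, $(a_1\wedge a_2\wedge\cdots\wedge a_n)^n\le c\,a_1a_2\cdots a_{n+1}$ for some $c\in L$ or $(a_1\wedge a_2\wedge\cdots\wedge a_n)^{n-1}a_{n+1}\le d\,a_1a_2\cdots a_{n+1}$ for some $d\in L$.
   Context: A multiplicative lattice is a complete lattice $L$ with least element $0$ and compact greatest element $1$, equipped with a commutative, associative product that distributes over arbitrary joins and has $1$ as multiplicative identity. An element $a$ is compact if $a\le\bigvee_{\alpha\in I}a_\alpha$ implies $a\le\bigvee_{\alpha\in I_0}a_\alpha$ for some finite $I_0\subseteq I$; $L_*$ denotes the set of compact elements. For $x,y\in L$, $(x:y)=\bigvee\{z: zy\le x\}$. An element $e$ is principal if $a\wedge be=((a:e)\wedge b)e$ and $(ae\vee b):e=(b:e)\vee a$ for all $a,b\in L$; a principal element lattice is a multiplicative lattice in which every element is principal. $a^0=1$. A proper element $q$ ($q<1$) is quasi $n$-absorbing if whenever $a^nb\le q$ for some $a,b\in L_*$, then $a^n\le q$ or $a^{n-1}b\le q$. *)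

theory Defs
  imports Main
begin

text \<open>A multiplicative lattice: the complete lattice structure is the type class
  complete_lattice (0 = bot, 1 = top); the product is an explicit operation m.\<close>

definition lcompact :: "'a::complete_lattice \<Rightarrow> bool" where
  "lcompact a \<longleftrightarrow> (\<forall>S. a \<le> Sup S \<longrightarrow> (\<exists>T. T \<subseteq> S \<and> finite T \<and> a \<le> Sup T))"

definition mult_lattice :: "('a::complete_lattice \<Rightarrow> 'a \<Rightarrow> 'a) \<Rightarrow> bool" where
  "mult_lattice m \<longleftrightarrow>
     lcompact (top::'a)
   \<and> (\<forall>a b. m a b = m b a)
   \<and> (\<forall>a b c. m (m a b) c = m a (m b c))
   \<and> (\<forall>a S. m a (Sup S) = Sup (m a ` S))
   \<and> (\<forall>a. m a top = a)"

definition lres :: "('a::complete_lattice \<Rightarrow> 'a \<Rightarrow> 'a) \<Rightarrow> 'a \<Rightarrow> 'a \<Rightarrow> 'a" where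
  "lres m x y = Sup {z. m z y \<le> x}"

definition principal_el :: "('a::complete_lattice \<Rightarrow> 'a \<Rightarrow> 'a) \<Rightarrow> 'a \<Rightarrow> bool" where
  "principal_el m e \<longleftrightarrow>
     (\<forall>a b. inf a (m b e) = m (inf (lres m a e) b) e
          \<and> lres m (sup (m a e) b) e = sup (lres m b e) a)"

definition principal_element_lattice :: "('a::complete_lattice \<Rightarrow> 'a \<Rightarrow> 'a) \<Rightarrow> bool" where
  "principal_element_lattice m \<longleftrightarrow> mult_lattice m \<and> (\<forall>e. principal_el m e)"

primrec lpow :: "('a::complete_lattice \<Rightarrow> 'a \<Rightarrow> 'a) \<Rightarrow> 'a \<Rightarrow> nat \<Rightarrow> 'a" where
  "lpow m a 0 = top"
| "lpow m a (Suc k) = m a (lpow m a k)"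

definition lprod :: "('a::complete_lattice \<Rightarrow> 'a \<Rightarrow> 'a) \<Rightarrow> 'a list \<Rightarrow> 'a" where
  "lprod m xs = foldr m xs top"

definition quasi_n_absorbing :: "('a::complete_lattice \<Rightarrow> 'a \<Rightarrow> 'a) \<Rightarrow> nat \<Rightarrow> 'a \<Rightarrow> bool" where
  "quasi_n_absorbing m n q \<longleftrightarrow> q < top \<and>
     (\<forall>a b. lcompact a \<longrightarrow> lcompact b \<longrightarrow> m (lpow m a n) b \<le> q \<longrightarrow>
        lpow m a n \<le> q \<or> m (lpow m a (n - 1)) b \<le> q)"

end

theory Submission
  imports Defs
begin

text \<open>All three conditions are equivalent to the self-absorption property
  \<open>a\<^sup>n \<le> a\<^sup>n b \<or> a\<^sup>n\<^sup>-\<^sup>1 b \<le> a\<^sup>n b\<close> for compact \<open>a, b\<close>: one direction applies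
  the quasi \<open>n\<close>-absorbing property to \<open>q = a\<^sup>n b\<close>, the other uses \<open>a\<^sup>n b \<le> q\<close>.
  In a principal element lattice \<open>x \<le> e\<close> holds exactly when \<open>x = c e\<close>, which gives (2).
  Moreover every element is compact: writing \<open>y = \<Squnion>S\<close> gives \<open>y = (\<Squnion>\<^sub>s\<^sub>\<in>\<^sub>S (s:y)) y\<close>,
  hence \<open>1 = (0:y) \<or> \<Squnion>\<^sub>s\<^sub>\<in>\<^sub>S (s:y)\<close>, and compactness of \<open>1\<close> yields a finite subfamily.
  So the meet \<open>a\<^sub>1 \<and> \<dots> \<and> a\<^sub>n\<close> is compact and may serve as \<open>a\<close>, with
  \<open>(a\<^sub>1 \<and> \<dots> \<and> a\<^sub>n)\<^sup>n a\<^sub>n\<^sub>+\<^sub>1 \<le> a\<^sub>1 \<cdots> a\<^sub>n\<^sub>+\<^sub>1\<close>, which gives (3) with \<open>c = d = 1\<close>.\<close>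

context
  fixes m :: "'a::complete_lattice \<Rightarrow> 'a \<Rightarrow> 'a"
  assumes ml: "mult_lattice m"
begin

lemma lmult_commute: "m a b = m b a"
  using ml unfolding mult_lattice_def by blast

lemma lmult_assoc: "m (m a b) c = m a (m b c)"
  using ml unfolding mult_lattice_def by blast

lemma lmult_Sup_right: "m a (Sup S) = Sup (m a ` S)"
  using ml unfolding mult_lattice_def by blast

lemma lmult_top_right [simp]: "m a top = a"
  using ml unfolding mult_lattice_def by blast

lemma lmult_top_left [simp]: "m top a = a"
  using lmult_commute[of top a] by simp

lemma lcompact_top: "lcompact (top::'a)"
  using ml unfolding mult_lattice_def by blast

lemma lmult_Sup_left: "m (Sup S) a = Sup ((\<lambda>s. m s a) ` S)"
  by (simp add: lmult_commute[of _ a] lmult_Sup_right)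

lemma lmult_sup_left: "m (sup x y) a = sup (m x a) (m y a)"
  using lmult_Sup_left[of "{x, y}" a] by simp

lemma lmult_mono_right: "x \<le> y \<Longrightarrow> m c x \<le> m c y"
  using lmult_Sup_right[of c "{x, y}"] by (simp add: le_iff_sup)

lemma lmult_mono: "x \<le> y \<Longrightarrow> c \<le> d \<Longrightarrow> m c x \<le> m d y"
  using lmult_mono_right[of x y c] lmult_mono_right[of c d y] lmult_commute[of _ y]
  by (metis order_trans)

lemma lmult_le_right: "m c x \<le> x"
  using lmult_mono[of x x c top] by simp

lemma lres_mult_le: "m (lres m x y) y \<le> x"
  unfolding lres_def lmult_Sup_left by (rule Sup_least) blast

lemma lres_self: "lres m y y = top"
  unfolding lres_def by (rule top_le) (simp add: Sup_upper)

lemma lprod_append_single: "lprod m (xs @ [y]) = m (lprod m xs) y"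
  by (induction xs) (simp_all add: lprod_def lmult_assoc)

lemma lprod_replicate: "lprod m (replicate k x) = lpow m x k"
  by (induction k) (simp_all add: lprod_def)

lemma lpow_le_lprod: "(\<And>z. z \<in> set xs \<Longrightarrow> x \<le> z) \<Longrightarrow> lpow m x (length xs) \<le> lprod m xs"
  by (induction xs) (simp_all add: lprod_def lmult_mono)

end

lemma lcompact_le_Sup_insert_image:
  assumes "lcompact a" and "a \<le> Sup (insert r (f ` S))"
  obtains S0 where "S0 \<subseteq> S" "finite S0" "a \<le> sup r (Sup (f ` S0))"
proof -
  obtain T where T: "T \<subseteq> insert r (f ` S)" "finite T" "a \<le> Sup T"
    using assms unfolding lcompact_def by blast
  have "T - {r} \<subseteq> f ` S" "finite (T - {r})"
    using T(1,2) by auto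
  then obtain S0 where S0: "S0 \<subseteq> S" "finite S0" "T - {r} = f ` S0"
    using finite_subset_image by meson
  have "T \<subseteq> insert r (f ` S0)"
    using S0(3) by blast
  then have "Sup T \<le> sup r (Sup (f ` S0))"
    by (metis Sup_insert Sup_subset_mono)
  with T(3) S0(1,2) show thesis
    using that order_trans by blast
qed

context
  fixes m :: "'a::complete_lattice \<Rightarrow> 'a \<Rightarrow> 'a" and e :: 'a
  assumes ml: "mult_lattice m" and principal: "principal_el m e"
begin

lemma principal_el_lres_mult: "x \<le> e \<Longrightarrow> m (lres m x e) e = x"
  using principal ml unfolding principal_el_def by (metis inf_absorb1 inf_top_right lmult_top_left)

lemma principal_el_le_iff_mult: "x \<le> e \<longleftrightarrow> (\<exists>c. x = m c e)"
  using principal_el_lres_mult lmult_le_right[OF ml] by metis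

text \<open>The second principal law \<open>(c e \<or> 0) : e = (0 : e) \<or> c\<close> at \<open>c e = e\<close>,
  combined with \<open>e : e = 1\<close>.\<close>
lemma principal_el_sup_lres_bot: "m c e = e \<Longrightarrow> sup (lres m bot e) c = top"
  using principal lres_self[OF ml] unfolding principal_el_def by (metis sup_bot_right)

end

lemma principal_element_lattice_mult_lattice:
  "principal_element_lattice m \<Longrightarrow> mult_lattice m"
  unfolding principal_element_lattice_def by blast

lemma principal_element_lattice_principal_el:
  "principal_element_lattice m \<Longrightarrow> principal_el m e"
  unfolding principal_element_lattice_def by blast

lemma principal_element_lattice_lcompact:
  fixes m :: "'a::complete_lattice \<Rightarrow> 'a \<Rightarrow> 'a"
  assumes pel: "principal_element_lattice m"
  shows "lcompact (x::'a)"
  unfolding lcompact_def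
proof (intro allI impI)
  fix S assume x_le: "x \<le> Sup S"
  have ml: "mult_lattice m" and principal: "principal_el m (Sup S)"
    using pel principal_element_lattice_mult_lattice principal_element_lattice_principal_el
    by blast+
  define f where "f s = lres m s (Sup S)" for s
  have mult_Sup_f: "m (Sup (f ` S0)) (Sup S) = Sup S0" if "S0 \<subseteq> S" for S0
  proof -
    have "m (f s) (Sup S) = s" if "s \<in> S0" for s
      unfolding f_def using \<open>S0 \<subseteq> S\<close> that
      by (intro principal_el_lres_mult[OF ml principal]) (auto intro: Sup_upper)
    then show ?thesis
      by (simp add: lmult_Sup_left[OF ml] image_image)
  qed
  have "sup (lres m bot (Sup S)) (Sup (f ` S)) = top"
    by (rule principal_el_sup_lres_bot[OF ml principal mult_Sup_f[OF order_refl]])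
  then obtain S0 where S0: "S0 \<subseteq> S" "finite S0"
    and top_le: "top \<le> sup (lres m bot (Sup S)) (Sup (f ` S0))"
    using lcompact_le_Sup_insert_image[OF lcompact_top[OF ml], of "lres m bot (Sup S)" f S]
    by (metis Sup_insert order_refl)
  have "Sup S = m top (Sup S)"
    using ml by simp
  also have "\<dots> \<le> m (sup (lres m bot (Sup S)) (Sup (f ` S0))) (Sup S)"
    using top_le by (rule lmult_mono[OF ml order_refl])
  also have "\<dots> = Sup S0"
    using lres_mult_le[OF ml, of bot "Sup S"] mult_Sup_f[OF S0(1)]
    by (simp add: lmult_sup_left[OF ml] bot_unique)
  finally show "\<exists>T\<subseteq>S. finite T \<and> x \<le> Sup T"
    using x_le S0 order_trans by blast
qed

definition products_self_absorbing :: "('a::complete_lattice \<Rightarrow> 'a \<Rightarrow> 'a) \<Rightarrow> nat \<Rightarrow> bool" where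
  "products_self_absorbing m n \<longleftrightarrow>
     (\<forall>a b. lcompact a \<longrightarrow> lcompact b \<longrightarrow>
        lpow m a n \<le> m (lpow m a n) b \<or> m (lpow m a (n - 1)) b \<le> m (lpow m a n) b)"

lemma all_quasi_n_absorbing_iff_products_self_absorbing:
  "(\<forall>q. q < top \<longrightarrow> quasi_n_absorbing m n q) \<longleftrightarrow> products_self_absorbing m n"
proof
  assume all_qa: "\<forall>q. q < top \<longrightarrow> quasi_n_absorbing m n q"
  show "products_self_absorbing m n"
    unfolding products_self_absorbing_def
  proof (intro allI impI)
    fix a b :: 'a
    assume "lcompact a" "lcompact b"
    show "lpow m a n \<le> m (lpow m a n) b \<or> m (lpow m a (n - 1)) b \<le> m (lpow m a n) b"
    proof (cases "m (lpow m a n) b = top")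
      case False
      then show ?thesis
        using all_qa \<open>lcompact a\<close> \<open>lcompact b\<close> top.not_eq_extremum
        unfolding quasi_n_absorbing_def by blast
    qed simp
  qed
next
  assume "products_self_absorbing m n"
  then show "\<forall>q. q < top \<longrightarrow> quasi_n_absorbing m n q"
    unfolding products_self_absorbing_def quasi_n_absorbing_def
    using order_trans by blast
qed

lemma products_self_absorbing_iff_multiples:
  assumes pel: "principal_element_lattice m"
  shows "products_self_absorbing m n \<longleftrightarrow>
    (\<forall>a b. lcompact a \<longrightarrow> lcompact b \<longrightarrow>
        (\<exists>c. lpow m a n = m c (m (lpow m a n) b))
      \<or> (\<exists>d. m (lpow m a (n - 1)) b = m d (m (lpow m a n) b)))"
  using principal_el_le_iff_mult[OF principal_element_lattice_mult_lattice[OF pel]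
      principal_element_lattice_principal_el[OF pel]]
  unfolding products_self_absorbing_def by simp

lemma products_self_absorbing_iff_meets:
  fixes m :: "'a::complete_lattice \<Rightarrow> 'a \<Rightarrow> 'a"
  assumes pel: "principal_element_lattice m" and "n \<ge> 1"
  shows "products_self_absorbing m n \<longleftrightarrow>
    (\<forall>a :: nat \<Rightarrow> 'a. (\<forall>i\<in>{1..n+1}. lcompact (a i)) \<longrightarrow>
        (\<exists>c. lpow m (Inf (a ` {1..n})) n \<le> m c (lprod m (map a [1..<n+2])))
      \<or> (\<exists>d. m (lpow m (Inf (a ` {1..n})) (n - 1)) (a (n+1))
              \<le> m d (lprod m (map a [1..<n+2]))))"
    (is "_ \<longleftrightarrow> (\<forall>a. ?compact a \<longrightarrow> ?meets a)")
proof
  have ml: "mult_lattice m"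
    using pel by (rule principal_element_lattice_mult_lattice)
  have upto_snoc: "[1..<n+2] = [1..<n+1] @ [n+1]"
    by simp
  {
    assume self_abs: "products_self_absorbing m n"
    show "\<forall>a. ?compact a \<longrightarrow> ?meets a"
    proof (intro allI impI)
      fix a :: "nat \<Rightarrow> 'a"
      let ?x = "Inf (a ` {1..n})"
      have "lpow m ?x (length (map a [1..<n+1])) \<le> lprod m (map a [1..<n+1])"
        by (rule lpow_le_lprod[OF ml]) (auto intro: Inf_lower)
      then have "m (lpow m ?x n) (a (n+1)) \<le> m (lprod m (map a [1..<n+1])) (a (n+1))"
        by (simp add: lmult_mono[OF ml] del: upt_Suc)
      also have "\<dots> = lprod m (map a [1..<n+2])"
        unfolding upto_snoc by (simp only: map_append list.map lprod_append_single[OF ml])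
      finally have "m (lpow m ?x n) (a (n+1)) \<le> lprod m (map a [1..<n+2])" .
      \<comment> \<open>in a general multiplicative lattice a meet of compact elements need not be compact\<close>
      moreover have "lcompact ?x" "lcompact (a (n+1))"
        using principal_element_lattice_lcompact[OF pel] by blast+
      ultimately have "lpow m ?x n \<le> lprod m (map a [1..<n+2])
          \<or> m (lpow m ?x (n - 1)) (a (n+1)) \<le> lprod m (map a [1..<n+2])"
        using self_abs order_trans unfolding products_self_absorbing_def by blast
      then show "?meets a"
        using lmult_top_left[OF ml, of "lprod m (map a [1..<n+2])"] by metis
    qed
  }
  assume meets: "\<forall>a. ?compact a \<longrightarrow> ?meets a"
  show "products_self_absorbing m n"
    unfolding products_self_absorbing_def
  proof (intro allI impI)
    fix a b :: 'a
    assume "lcompact a" "lcompact b"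
    define f where "f i = (if i \<le> n then a else b)" for i :: nat
    have "f ` {1..n} = {a}"
      using \<open>n \<ge> 1\<close> unfolding f_def by auto
    moreover have "map f [1..<n+2] = replicate n a @ [b]"
    proof -
      have "map f [1..<n+1] = map (\<lambda>_. a) [1..<n+1]"
        by (rule map_cong) (auto simp: f_def)
      then have "map f [1..<n+1] = replicate n a"
        by (simp add: map_replicate_const del: upt_Suc)
      moreover have "f (n+1) = b"
        by (simp add: f_def)
      ultimately show ?thesis
        unfolding upto_snoc by simp
    qed
    ultimately have meets_f: "?meets f \<longleftrightarrow>
        (\<exists>c. lpow m a n \<le> m c (m (lpow m a n) b))
      \<or> (\<exists>d. m (lpow m a (n - 1)) b \<le> m d (m (lpow m a n) b))"
      by (simp only: lprod_append_single[OF ml] lprod_replicate[OF ml] cInf_singleton)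
         (simp add: f_def)
    have "?compact f"
      using \<open>lcompact a\<close> \<open>lcompact b\<close> unfolding f_def by simp
    with meets meets_f show "lpow m a n \<le> m (lpow m a n) b \<or> m (lpow m a (n - 1)) b \<le> m (lpow m a n) b"
      using lmult_le_right[OF ml] order_trans by blast
  qed
qed

theorem mainTheorem11:
  fixes m :: "'a::complete_lattice \<Rightarrow> 'a \<Rightarrow> 'a" and n :: nat
  assumes "principal_element_lattice m" and "n \<ge> 1"
  shows "((\<forall>q. q < top \<longrightarrow> quasi_n_absorbing m n q)
          \<longleftrightarrow> (\<forall>a b. lcompact a \<longrightarrow> lcompact b \<longrightarrow>
                (\<exists>c. lpow m a n = m c (m (lpow m a n) b))
              \<or> (\<exists>d. m (lpow m a (n - 1)) b = m d (m (lpow m a n) b))))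
       \<and> ((\<forall>q. q < top \<longrightarrow> quasi_n_absorbing m n q)
          \<longleftrightarrow> (\<forall>a :: nat \<Rightarrow> 'a. (\<forall>i\<in>{1..n+1}. lcompact (a i)) \<longrightarrow>
                (\<exists>c. lpow m (Inf (a ` {1..n})) n \<le> m c (lprod m (map a [1..<n+2])))
              \<or> (\<exists>d. m (lpow m (Inf (a ` {1..n})) (n - 1)) (a (n+1))
                      \<le> m d (lprod m (map a [1..<n+2])))))"
  unfolding all_quasi_n_absorbing_iff_products_self_absorbing
  using products_self_absorbing_iff_multiples[OF assms(1)]
    products_self_absorbing_iff_meets[OF assms]
  by blast

end
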